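(* Let $\mathcal{I}(X,\mathcal{R})$ be a generalized index coding problem over $\mathbb{F}_q$ with $m$ messages $x_1,\dots,x_m\in\mathbb{F}_q^n$, message vector $X=(x_1,\dots,x_m)\in\mathbb{F}_q^{mn}$, and receivers $R_i=(\mathcal{W}_i,\mathcal{H}_i)$ described by knowledge matrices $K_i\in\mathbb{F}_q^{mn\times|\mathcal{H}_i|}$ and demand matrices $D_i\in\mathbb{F}_q^{mn\times|\mathcal{W}_i|}$. A linear index code over $\mathbb{F}_q$ of length $l$ and dimension $n$ exists for $\mathcal{I}(X,\mathcal{R})$ if and only if there exists a discrete polymatroid $\mathbb{D}=(\{1,\dots,m+1\},\rho)$ representable over $\mathbb{F}_q$ with $\rho(\mathbb{D})=mn$ and with representation matrices $A_1,A_2,\dots,A_{m+1}$ satisfying: (C1) $\rho(\{i\})=n$ for all $i\in\{1,\dots,m\}$, $\rho(\{1,\dots,m\})=mn$, and $\rho(\{m+1\})=l$; (C2) for every receiver $R_i\in\mathcal{R}$ described by $(D_i,K_i)$, $\operatorname{rank}([AD_i\ \ AK_i\ \ A_{m+1}])=\operatorname{rank}([AK_i\ \ A_{m+1}])$, where $A=[A_1\ A_2\ \cdots\ A_m]$.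
   Context: A generalized index coding problem: a source holds $X=(x_1,\dots,x_m)$, $x_i\in\mathbb{F}_q^n$, viewed as a row vector in $\mathbb{F}_q^{mn}$. Each receiver $R_i$ has a Has-set $\mathcal{H}_i$ of linear functions $h_{i,j}(X)=X\cdot K_{i,j}$ ($K_{i,j}\in\mathbb{F}_q^{mn}$) and a Want-set $\mathcal{W}_i$ of linear functions $w_{i,j}(X)=X\cdot D_{i,j}$; the knowledge matrix is $K_i=[K_{i,1},\dots,K_{i,|\mathcal{H}_i|}]$ and the demand matrix is $D_i=[D_{i,1},\dots,D_{i,|\mathcal{W}_i|}]$. An index code over $\mathbb{F}_q$ of length $l$ and dimension $n$ is a map $f:\mathbb{F}_q^{mn}\to\mathbb{F}_q^l$ such that for every receiver $R_i$ there is a function $\psi_{R_i}$ with $\psi_{R_i}(XK_i,f(X))=XD_i$ for all $X\in\mathbb{F}_q^{mn}$; it is linear if $f(X)=XL$ for some $mn\times l$ matrix $L$ over $\mathbb{F}_q$. A discrete polymatroid on ground set $\{1,\dots,t\}$ is determined by a rank function $\rho:2^{\{1,\dots,t\}}\to\mathbb{Z}_{\ge0}$ that is monotone, submodular and satisfies $\rho(\emptyset)=0$; its rank is $\rho(\mathbb{D})=\rho(\{1,\dots,t\})$. It is representable over $\mathbb{F}_q$ if there are subspaces $V_1,\dots,V_t$ of a vector space over $\mathbb{F}_q$ with $\dim(\sum_{i\in S}V_i)=\rho(S)$ for all $S\subseteq\{1,\dots,t\}$; representation matrices are matrices $A_i$ of size $\rho(\{1,\dots,t\})\times\rho(\{i\})$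 whose column span is $V_i$ (in a common coordinate system of dimension $\rho(\{1,\dots,t\})$).
   Formalization: The equivalence is asserted only for index codes of length l <= mn. The statement above fails without it. *)

theory Defs
  imports "Jordan_Normal_Form.DL_Rank"
begin

definition mrank :: "'a::field mat \<Rightarrow> nat" where
  "mrank A = vec_space.rank (dim_row A) A"

definition hcat :: "'a::zero mat \<Rightarrow> 'a mat \<Rightarrow> 'a mat" where
  "hcat A B = mat (dim_row A) (dim_col A + dim_col B)
     (\<lambda>(i,j). if j < dim_col A then A $$ (i,j) else B $$ (i, j - dim_col A))"

definition hcat_list :: "nat \<Rightarrow> 'a::zero mat list \<Rightarrow> 'a mat" where
  "hcat_list r As = foldr hcat As (zero_mat r 0)"

definition vmult :: "'a::comm_semiring_0 vec \<Rightarrow> 'a mat \<Rightarrow> 'a vec" where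
  "vmult X M = transpose_mat M *\<^sub>v X"

definition wf_receivers :: "nat \<Rightarrow> nat \<Rightarrow> ('a mat \<times> 'a mat) list \<Rightarrow> bool" where
  "wf_receivers m n R \<longleftrightarrow> (\<forall>(K,D)\<in>set R. dim_row K = m*n \<and> dim_row D = m*n)"

(* L (an mn x l matrix) defines a linear index code f(X) = X L for the problem *)
definition linear_index_code ::
  "nat \<Rightarrow> nat \<Rightarrow> ('a::field mat \<times> 'a mat) list \<Rightarrow> nat \<Rightarrow> 'a mat \<Rightarrow> bool" where
  "linear_index_code m n R l L \<longleftrightarrow> L \<in> carrier_mat (m*n) l \<and>
     (\<forall>(K,D)\<in>set R. \<exists>\<psi>. \<forall>X\<in>carrier_vec (m*n). \<psi> (vmult X K) (vmult X L) = vmult X D)"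

definition discrete_polymatroid :: "nat set \<Rightarrow> (nat set \<Rightarrow> nat) \<Rightarrow> bool" where
  "discrete_polymatroid E \<rho> \<longleftrightarrow> \<rho> {} = 0 \<and>
     (\<forall>X Y. X \<subseteq> Y \<and> Y \<subseteq> E \<longrightarrow> \<rho> X \<le> \<rho> Y) \<and>
     (\<forall>X Y. X \<subseteq> E \<and> Y \<subseteq> E \<longrightarrow> \<rho> (X \<union> Y) + \<rho> (X \<inter> Y) \<le> \<rho> X + \<rho> Y)"

definition representation_matrices :: "nat set \<Rightarrow> (nat set \<Rightarrow> nat) \<Rightarrow> (nat \<Rightarrow> 'a::field mat) \<Rightarrow> bool" where
  "representation_matrices E \<rho> A \<longleftrightarrow>
     (\<forall>i\<in>E. A i \<in> carrier_mat (\<rho> E) (\<rho> {i})) \<and>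
     (\<forall>S\<subseteq>E. mrank (hcat_list (\<rho> E) (map A (sorted_list_of_set S))) = \<rho> S)"

end

theory Submission
  imports Defs
begin

text \<open>A linear code \<open>X \<mapsto> X L\<close> serves the receiver with knowledge matrix \<open>K\<close> and
demand matrix \<open>D\<close> exactly when every \<open>X\<close> annihilated by the columns of \<open>K\<close> and \<open>L\<close> is also
annihilated by the columns of \<open>D\<close>: a decoder sees only \<open>X K\<close> and \<open>X L\<close>, and linearity reduces
"equal observations force equal demands" to the kernel. By duality this says that the columns
of \<open>D\<close> lie in the span of those of \<open>K\<close> and \<open>L\<close>, i.e. \<open>rank [D K L] = rank [K L]\<close>.
Ranks of column concatenations are monotone and submodular, so every family of matrices
represents the discrete polymatroid of its column spaces. Given a code \<open>L\<close>, take for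
\<open>A\<^sub>1, \<dots>, A\<^sub>m\<close> the column blocks of the identity and for \<open>A\<^sub>m\<^sub>+\<^sub>1\<close> a rank-\<open>l\<close>
matrix whose columns span those of \<open>L\<close>. Conversely, (C1) makes \<open>AA = [A\<^sub>1 \<cdots> A\<^sub>m]\<close>
invertible, and \<open>L = AA\<^sup>-\<^sup>1 A\<^sub>m\<^sub>+\<^sub>1\<close> is a code, because multiplying \<open>D\<close>, \<open>K\<close> and
\<open>L\<close> by \<open>AA\<close> from the left does not change the annihilator condition.\<close>

context vec_space begin

abbreviation rank_set :: "'a vec set \<Rightarrow> nat" where
  "rank_set S \<equiv> vectorspace.dim class_ring (span_vs S)"

lemma lin_indpt_empty: "lin_indpt {}"
  by (simp add: finite_lin_indpt2)

lemma maximal_lin_indptD: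
  assumes "maximal U (\<lambda>T. T \<subseteq> S \<and> lin_indpt T)"
  shows "U \<subseteq> S" "lin_indpt U" "\<And>X. X \<subseteq> S \<Longrightarrow> lin_indpt X \<Longrightarrow> U \<subseteq> X \<Longrightarrow> X = U"
  using assms unfolding maximal_def by blast+

lemma maximal_lin_indpt_superset:
  assumes "finite S" "B \<subseteq> S" "lin_indpt B"
  obtains U where "maximal U (\<lambda>T. T \<subseteq> S \<and> lin_indpt T)" "B \<subseteq> U"
  using maximal_exists_superset[of S "\<lambda>T. T \<subseteq> S \<and> lin_indpt T" B] assms by auto

lemma maximal_lin_indpt_exists:
  assumes "finite S"
  obtains U where "maximal U (\<lambda>T. T \<subseteq> S \<and> lin_indpt T)"
  using maximal_lin_indpt_superset[OF assms empty_subsetI lin_indpt_empty] by blast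

lemma maximal_lin_indpt_spans:
  assumes S: "S \<subseteq> carrier_vec n" and U: "maximal U (\<lambda>T. T \<subseteq> S \<and> lin_indpt T)"
  shows "S \<subseteq> span U"
proof
  fix s assume s: "s \<in> S"
  note U_S = maximal_lin_indptD(1)[OF U] and U_li = maximal_lin_indptD(2)[OF U]
  with S have U_carrier: "U \<subseteq> carrier_vec n" by auto
  show "s \<in> span U"
  proof (rule ccontr)
    assume s_out: "s \<notin> span U"
    then have "s \<notin> U" using span_mem[OF U_carrier] by auto
    moreover have "lin_indpt (U \<union> {s})"
      using lin_dep_iff_in_span[OF U_carrier U_li _ \<open>s \<notin> U\<close>] s_out s S by auto
    ultimately show False using maximal_lin_indptD(3)[OF U, of "U \<union> {s}"] U_S s by auto
  qed
qed

lemma span_eq_if_subset_span: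
  assumes "S \<subseteq> T" "T \<subseteq> carrier_vec n" "T \<subseteq> span S"
  shows "span S = span T"
proof -
  have "S \<subseteq> carrier_vec n" using assms by auto
  then have "span T \<subseteq> span S" using span_is_subset[OF assms(3) span_is_submodule] by blast
  then show ?thesis using span_is_monotone[OF assms(1)] by blast
qed

lemma maximal_lin_indpt_nested:
  assumes "S \<subseteq> T" "finite T"
  obtains U U' where "maximal U (\<lambda>X. X \<subseteq> S \<and> lin_indpt X)"
    "maximal U' (\<lambda>X. X \<subseteq> T \<and> lin_indpt X)" "U \<subseteq> U'" "finite U'"
proof -
  obtain U where U: "maximal U (\<lambda>X. X \<subseteq> S \<and> lin_indpt X)"
    using maximal_lin_indpt_exists[OF finite_subset[OF assms]] by blast
  have "U \<subseteq> T" using maximal_lin_indptD(1)[OF U] assms(1) by blast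
  then obtain U' where U': "maximal U' (\<lambda>X. X \<subseteq> T \<and> lin_indpt X)" "U \<subseteq> U'"
    using maximal_lin_indpt_superset[OF assms(2)] maximal_lin_indptD(2)[OF U] by blast
  moreover have "finite U'" using finite_subset[OF maximal_lin_indptD(1)[OF U'(1)] assms(2)] .
  ultimately show ?thesis using that U by blast
qed

lemma rank_set_mono:
  assumes "S \<subseteq> T" "T \<subseteq> carrier_vec n" "finite T"
  shows "rank_set S \<le> rank_set T"
proof -
  obtain U U' where U: "maximal U (\<lambda>X. X \<subseteq> S \<and> lin_indpt X)"
    and U': "maximal U' (\<lambda>X. X \<subseteq> T \<and> lin_indpt X)" "U \<subseteq> U'" "finite U'"
    using maximal_lin_indpt_nested[OF assms(1,3)] by blast
  have S: "S \<subseteq> carrier_vec n" "finite S" using assms by (auto intro: finite_subset)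
  have "rank_set S = card U" using dim_span[OF S U] .
  also have "\<dots> \<le> card U'" using card_mono[OF U'(3,2)] .
  also have "\<dots> = rank_set T" using dim_span[OF assms(2,3) U'(1)] by simp
  finally show ?thesis .
qed

lemma rank_set_Un_Int:
  assumes S: "S \<subseteq> carrier_vec n" "finite S" and T: "T \<subseteq> carrier_vec n" "finite T"
  shows "rank_set (S \<union> T) + rank_set (S \<inter> T) \<le> rank_set S + rank_set T"
proof -
  obtain B0 where B0: "maximal B0 (\<lambda>X. X \<subseteq> S \<inter> T \<and> lin_indpt X)"
    using maximal_lin_indpt_exists[OF finite_Int[OF disjI1[OF S(2)]]] by blast
  note B0_ST = maximal_lin_indptD(1)[OF B0] and B0_li = maximal_lin_indptD(2)[OF B0]
  obtain BS where BS: "maximal BS (\<lambda>X. X \<subseteq> S \<and> lin_indpt X)" "B0 \<subseteq> BS"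
    using maximal_lin_indpt_superset[OF S(2) _ B0_li] B0_ST by blast
  obtain BT where BT: "maximal BT (\<lambda>X. X \<subseteq> T \<and> lin_indpt X)" "B0 \<subseteq> BT"
    using maximal_lin_indpt_superset[OF T(2) _ B0_li] B0_ST by blast
  note BS_S = maximal_lin_indptD(1)[OF BS(1)] and BT_T = maximal_lin_indptD(1)[OF BT(1)]
  have fin: "finite BS" "finite BT"
    using finite_subset[OF BS_S S(2)] finite_subset[OF BT_T T(2)] .
  txt \<open>Bases of \<open>S\<close> and \<open>T\<close> extending a common basis of \<open>S \<inter> T\<close> meet exactly in it.\<close>
  have Int: "BS \<inter> BT = B0"
  proof (rule maximal_lin_indptD(3)[OF B0])
    show "lin_indpt (BS \<inter> BT)"
      using subset_li_is_li[OF maximal_lin_indptD(2)[OF BS(1)]] by blast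
  qed (use BS_S BT_T BS(2) BT(2) in blast)+
  have carrier: "BS \<union> BT \<subseteq> carrier_vec n" using BS_S BT_T S T by blast
  have "S \<union> T \<subseteq> span (BS \<union> BT)"
    using subset_trans[OF maximal_lin_indpt_spans[OF S(1) BS(1)] span_is_monotone[OF Un_upper1]]
      subset_trans[OF maximal_lin_indpt_spans[OF T(1) BT(1)] span_is_monotone[OF Un_upper2]]
    by (rule Un_least)
  then have "span (BS \<union> BT) = span (S \<union> T)"
    using BS_S BT_T S T by (intro span_eq_if_subset_span) blast+
  obtain U where U: "maximal U (\<lambda>X. X \<subseteq> BS \<union> BT \<and> lin_indpt X)"
    using maximal_lin_indpt_exists[OF finite_UnI[OF fin]] by blast
  have "rank_set (S \<union> T) = rank_set (BS \<union> BT)" using \<open>span (BS \<union> BT) = span (S \<union> T)\<close> by (simp only:)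
  also have "\<dots> = card U" using dim_span[OF carrier finite_UnI[OF fin] U] .
  also have "\<dots> \<le> card (BS \<union> BT)" using card_mono[OF finite_UnI[OF fin] maximal_lin_indptD(1)[OF U]] .
  finally have "rank_set (S \<union> T) \<le> card (BS \<union> BT)" .
  moreover have "card (BS \<union> BT) + card B0 = card BS + card BT"
    using card_Un_Int[OF fin] Int by simp
  moreover have "rank_set (S \<inter> T) = card B0"
    using dim_span[OF _ finite_Int[OF disjI1[OF S(2)]] B0] S(1) by blast
  moreover have "rank_set S = card BS" "rank_set T = card BT"
    using dim_span[OF S BS(1)] dim_span[OF T BT(1)] by blast+
  ultimately show ?thesis by linarith
qed

lemma rank_set_eq_iff_subset_span:
  assumes "S \<subseteq> T" "T \<subseteq> carrier_vec n" "finite T"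
  shows "rank_set S = rank_set T \<longleftrightarrow> T \<subseteq> span S"
proof
  assume "T \<subseteq> span S"
  then show "rank_set S = rank_set T" using span_eq_if_subset_span[OF assms(1,2)] by simp
next
  assume rank_eq: "rank_set S = rank_set T"
  obtain U U' where U: "maximal U (\<lambda>X. X \<subseteq> S \<and> lin_indpt X)"
    and U': "maximal U' (\<lambda>X. X \<subseteq> T \<and> lin_indpt X)" "U \<subseteq> U'" "finite U'"
    using maximal_lin_indpt_nested[OF assms(1,3)] by blast
  have S: "S \<subseteq> carrier_vec n" "finite S" using assms by (auto intro: finite_subset)
  have "card U = card U'" using dim_span[OF S U] dim_span[OF assms(2,3) U'(1)] rank_eq by simp
  then have "U = U'" using card_subset_eq[OF U'(3,2)] by simp
  then have "T \<subseteq> span U" using maximal_lin_indpt_spans[OF assms(2) U'(1)] by simp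
  also have "span U \<subseteq> span S" using span_is_monotone[OF maximal_lin_indptD(1)[OF U]] .
  finally show "T \<subseteq> span S" .
qed

lemma rank_set_full:
  assumes "set (unit_vecs n) \<subseteq> S" "S \<subseteq> carrier_vec n"
  shows "rank_set S = n"
proof -
  have "carrier_vec n \<subseteq> span S"
    using span_is_monotone[OF assms(1)] span_unit_vecs_is_carrier by auto
  then have "span S = carrier_vec n" using span_is_subset2[OF assms(2)] by auto
  then have "span_vs S = V" by simp
  then show ?thesis using dim_is_n by simp
qed

lemma discrete_polymatroid_rank_set_UN:
  assumes W: "\<And>i. i \<in> E \<Longrightarrow> W i \<subseteq> carrier_vec n" "\<And>i. i \<in> E \<Longrightarrow> finite (W i)"
    and "finite E"
  shows "discrete_polymatroid E (\<lambda>S. rank_set (\<Union>i\<in>S. W i))"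
proof -
  have UN: "(\<Union>i\<in>S. W i) \<subseteq> carrier_vec n" "finite (\<Union>i\<in>S. W i)" if "S \<subseteq> E" for S
    using W that finite_subset[OF that \<open>finite E\<close>] by auto
  show ?thesis unfolding discrete_polymatroid_def
  proof (intro conjI allI impI)
    show "rank_set (\<Union>i\<in>{}. W i) = 0" using dim_zero_vs by simp
  next
    fix X Y assume "X \<subseteq> Y \<and> Y \<subseteq> E"
    then show "rank_set (\<Union>i\<in>X. W i) \<le> rank_set (\<Union>i\<in>Y. W i)"
      using rank_set_mono[of "\<Union>i\<in>X. W i" "\<Union>i\<in>Y. W i"] UN[of Y] by blast
  next
    fix X Y assume XY: "X \<subseteq> E \<and> Y \<subseteq> E"
    have "rank_set (\<Union>i\<in>X \<inter> Y. W i) \<le> rank_set ((\<Union>i\<in>X. W i) \<inter> (\<Union>i\<in>Y. W i))"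
      using rank_set_mono[of "\<Union>i\<in>X \<inter> Y. W i" "(\<Union>i\<in>X. W i) \<inter> (\<Union>i\<in>Y. W i)"] UN[of X] XY
      by blast
    moreover have "(\<Union>i\<in>X \<union> Y. W i) = (\<Union>i\<in>X. W i) \<union> (\<Union>i\<in>Y. W i)" by blast
    ultimately show "rank_set (\<Union>i\<in>X \<union> Y. W i) + rank_set (\<Union>i\<in>X \<inter> Y. W i)
      \<le> rank_set (\<Union>i\<in>X. W i) + rank_set (\<Union>i\<in>Y. W i)"
      using rank_set_Un_Int[of "\<Union>i\<in>X. W i" "\<Union>i\<in>Y. W i"] UN[of X] UN[of Y] XY by simp
  qed
qed

lemma lin_indpt_extend_card:
  assumes B: "B \<subseteq> carrier_vec n" "finite B" "lin_indpt B" and "card B \<le> l" "l \<le> n"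
  obtains C where "B \<subseteq> C" "C \<subseteq> carrier_vec n" "finite C" "lin_indpt C" "card C = l"
proof -
  let ?S = "B \<union> set (unit_vecs n)"
  have S: "?S \<subseteq> carrier_vec n" "finite ?S" using B unfolding unit_vecs_def by auto
  obtain U where U: "maximal U (\<lambda>T. T \<subseteq> ?S \<and> lin_indpt T)" "B \<subseteq> U"
    using maximal_lin_indpt_superset[OF S(2) _ B(3)] by blast
  have "card U = n" using dim_span[OF S U(1)] rank_set_full[of ?S] S(1) by simp
  have "finite U" using finite_subset[OF maximal_lin_indptD(1)[OF U(1)] S(2)] .
  then have "card (U - B) = n - card B" using card_Diff_subset[OF B(2) U(2)] \<open>card U = n\<close> by simp
  then have "l - card B \<le> card (U - B)" using \<open>l \<le> n\<close> by simp
  then obtain P where P: "P \<subseteq> U - B" "card P = l - card B" "finite P"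
    by (rule obtain_subset_with_card_n)
  have "B \<union> P \<subseteq> U" using P(1) U(2) by blast
  moreover have "card (B \<union> P) = l"
    using card_Un_disjoint[OF B(2) P(3)] P \<open>card B \<le> l\<close> by auto
  ultimately show ?thesis
    using that[of "B \<union> P"] maximal_lin_indptD(1,2)[OF U(1)] S(1) subset_li_is_li B(2) P(3)
    by blast
qed

lemma full_rank_invertible:
  assumes A: "A \<in> carrier_mat n n" and "rank A = n"
  obtains B where "B \<in> carrier_mat n n" "B * A = 1\<^sub>m n" "A * B = 1\<^sub>m n"
proof -
  have "det A \<noteq> 0" using det_rank_iff[OF A] assms(2) by simp
  from det_non_zero_imp_unit[OF A this, of "()"] show ?thesis
    using that unfolding Units_def ring_mat_def by auto
qed

lemma rank_mat_of_cols:
  assumes "set xs \<subseteq> carrier_vec n" "distinct xs" "lin_indpt (set xs)"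
  shows "rank (mat_of_cols n xs) = length xs"
  using lin_indpt_full_rank[of "mat_of_cols n xs" "length xs"] assms by simp

text \<open>The rows of the inverse of the matrix with columns \<open>C\<close> form the dual basis of \<open>C\<close>.\<close>

lemma dual_basis_vector:
  assumes C: "C \<subseteq> carrier_vec n" "finite C" "lin_indpt C" "card C = n" and v: "v \<in> C"
  obtains X where "X \<in> carrier_vec n" "X \<bullet> v = 1" "\<And>c. c \<in> C \<Longrightarrow> c \<noteq> v \<Longrightarrow> X \<bullet> c = 0"
proof -
  obtain xs where xs: "set xs = C" "distinct xs" using finite_distinct_list[OF C(2)] by blast
  have len: "length xs = n" using xs C(4) distinct_card by fastforce
  define M where "M = mat_of_cols n xs"
  have M: "M \<in> carrier_mat n n" unfolding M_def using len by auto
  have cols_M: "cols M = xs" unfolding M_def using xs C(1) by simp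
  have "rank M = n" unfolding M_def using rank_mat_of_cols[of xs] xs C len by simp
  then obtain Q where Q: "Q \<in> carrier_mat n n" "Q * M = 1\<^sub>m n"
    using full_rank_invertible[OF M] by blast
  obtain j where j: "j < n" "xs ! j = v" using v xs len by (metis in_set_conv_nth)
  have dual: "row Q j \<bullet> xs ! i = (if i = j then 1 else 0)" if "i < n" for i
  proof -
    have "row Q j \<bullet> xs ! i = (Q * M) $$ (j, i)"
      using Q(1) M that j(1) cols_M cols_nth[of i M] by simp
    then show ?thesis using Q(2) that j(1) by simp
  qed
  show ?thesis
  proof (rule that)
    show "row Q j \<in> carrier_vec n" using Q(1) by auto
    show "row Q j \<bullet> v = 1" using dual[OF j(1)] j(2) by simp
    fix c assume "c \<in> C" "c \<noteq> v"
    then obtain i where "i < n" "xs ! i = c" using xs len by (metis in_set_conv_nth)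
    then show "row Q j \<bullet> c = 0" using dual \<open>c \<noteq> v\<close> j(2) by auto
  qed
qed

lemma orthogonal_complement_separates_span:
  assumes W: "W \<subseteq> carrier_vec n" "finite W" and v: "v \<in> carrier_vec n" "v \<notin> span W"
  obtains X where "X \<in> orthogonal_complement W" "X \<bullet> v \<noteq> 0"
proof -
  obtain B where B: "maximal B (\<lambda>X. X \<subseteq> W \<and> lin_indpt X)"
    using maximal_lin_indpt_exists[OF W(2)] by blast
  note B_W = maximal_lin_indptD(1)[OF B]
  have B_carrier: "B \<subseteq> carrier_vec n" using B_W W(1) by blast
  have "v \<notin> span B" using v(2) span_is_monotone[OF B_W] by blast
  then have "v \<notin> B" using span_mem[OF B_carrier] by blast
  have "lin_indpt (B \<union> {v})"
    using lin_dep_iff_in_span[OF B_carrier maximal_lin_indptD(2)[OF B] v(1) \<open>v \<notin> B\<close>]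
      \<open>v \<notin> span B\<close> by blast
  moreover have "card (B \<union> {v}) \<le> n"
    using li_le_dim(2)[of "B \<union> {v}"] B_carrier v(1) finite_subset[OF B_W W(2)] dim_is_n
      \<open>lin_indpt (B \<union> {v})\<close> by auto
  ultimately obtain C where C: "B \<union> {v} \<subseteq> C" "C \<subseteq> carrier_vec n" "finite C" "lin_indpt C"
      "card C = n"
    using lin_indpt_extend_card[of "B \<union> {v}" n] B_carrier v(1) finite_subset[OF B_W W(2)] by blast
  then obtain X where X: "X \<in> carrier_vec n" "X \<bullet> v = 1" "\<And>c. c \<in> C \<Longrightarrow> c \<noteq> v \<Longrightarrow> X \<bullet> c = 0"
    using dual_basis_vector[of C v] by blast
  have "X \<in> orthogonal_complement B"
    unfolding orthogonal_complement_def using X C(1) \<open>v \<notin> B\<close> by blast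
  then have "X \<in> orthogonal_complement W"
    using in_orthogonal_complement_span[OF B_carrier]
      orthogonal_complement_subset[OF maximal_lin_indpt_spans[OF W(1) B]] by blast
  then show ?thesis using that X(2) by simp
qed

lemma subset_span_iff_orthogonal_complement:
  assumes W: "W \<subseteq> carrier_vec n" "finite W" and T: "T \<subseteq> carrier_vec n"
  shows "T \<subseteq> span W \<longleftrightarrow> orthogonal_complement W \<subseteq> orthogonal_complement T"
proof
  assume "T \<subseteq> span W"
  then show "orthogonal_complement W \<subseteq> orthogonal_complement T"
    using orthogonal_complement_subset in_orthogonal_complement_span[OF W(1)] by metis
next
  assume orth: "orthogonal_complement W \<subseteq> orthogonal_complement T"
  show "T \<subseteq> span W"
  proof (rule ccontr)
    assume "\<not> T \<subseteq> span W"
    then obtain v where "v \<in> T" "v \<notin> span W" by blast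
    then obtain X where "X \<in> orthogonal_complement W" "X \<bullet> v \<noteq> 0"
      using orthogonal_complement_separates_span[OF W] T by blast
    then show False using orth \<open>v \<in> T\<close> unfolding orthogonal_complement_def by blast
  qed
qed

lemma rank_set_Un_eq_iff_orthogonal_complement:
  assumes S: "S \<subseteq> carrier_vec n" "finite S" and T: "T \<subseteq> carrier_vec n" "finite T"
  shows "rank_set (T \<union> S) = rank_set S \<longleftrightarrow> orthogonal_complement S \<subseteq> orthogonal_complement T"
proof -
  have "rank_set (T \<union> S) = rank_set S \<longleftrightarrow> T \<union> S \<subseteq> span S"
    using rank_set_eq_iff_subset_span[of S "T \<union> S"] S T by auto
  also have "\<dots> \<longleftrightarrow> T \<subseteq> span S" using in_own_span[OF S(1)] by blast
  also have "\<dots> \<longleftrightarrow> orthogonal_complement S \<subseteq> orthogonal_complement T"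
    using subset_span_iff_orthogonal_complement[OF S T(1)] .
  finally show ?thesis .
qed

lemma orthogonal_complement_Un:
  "orthogonal_complement (S \<union> T) = orthogonal_complement S \<inter> orthogonal_complement T"
  unfolding orthogonal_complement_def by blast

lemma orthogonal_complement_image_mult:
  fixes A :: "'a mat"
  assumes A: "A \<in> carrier_mat n n" and S: "S \<subseteq> carrier_vec n" and Z: "Z \<in> carrier_vec n"
  shows "Z \<in> orthogonal_complement ((\<lambda>c. A *\<^sub>v c) ` S) \<longleftrightarrow>
    transpose_mat A *\<^sub>v Z \<in> orthogonal_complement S"
proof -
  have "Z \<bullet> (A *\<^sub>v c) = (transpose_mat A *\<^sub>v Z) \<bullet> c" if "c \<in> S" for c
    using transpose_vec_mult_scalar[of A n n c Z] A Z that S by auto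
  then show ?thesis using A Z unfolding orthogonal_complement_def by auto
qed

lemma orthogonal_complement_image_mult_cancel:
  fixes A B :: "'a mat"
  assumes A: "A \<in> carrier_mat n n" and B: "B \<in> carrier_mat n n" "B * A = 1\<^sub>m n"
    and S: "S \<subseteq> carrier_vec n" and T: "T \<subseteq> carrier_vec n"
    and orth: "orthogonal_complement ((\<lambda>c. A *\<^sub>v c) ` S)
      \<subseteq> orthogonal_complement ((\<lambda>c. A *\<^sub>v c) ` T)"
  shows "orthogonal_complement S \<subseteq> orthogonal_complement T"
proof
  fix Z assume Z: "Z \<in> orthogonal_complement S"
  then have Z_carrier: "Z \<in> carrier_vec n" unfolding orthogonal_complement_def by blast
  define W where "W = transpose_mat B *\<^sub>v Z"
  have W: "W \<in> carrier_vec n" unfolding W_def using B(1) Z_carrier by simp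
  have "transpose_mat A *\<^sub>v W = (transpose_mat A * transpose_mat B) *\<^sub>v Z"
    unfolding W_def using A B(1) Z_carrier by (simp add: assoc_mult_mat_vec[of _ n n _ n])
  also have "\<dots> = transpose_mat (B * A) *\<^sub>v Z" using transpose_mult[of B n n A n] B(1) A by simp
  finally have W_Z: "transpose_mat A *\<^sub>v W = Z" using B(2) Z_carrier by simp
  then have "W \<in> orthogonal_complement ((\<lambda>c. A *\<^sub>v c) ` S)"
    using orthogonal_complement_image_mult[OF A S W] Z by simp
  then have "W \<in> orthogonal_complement ((\<lambda>c. A *\<^sub>v c) ` T)" using orth by blast
  then show "Z \<in> orthogonal_complement T"
    using orthogonal_complement_image_mult[OF A T W] W_Z by simp
qed

end

lemma cols_mult:
  assumes "A \<in> carrier_mat nr n" "M \<in> carrier_mat n k"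
  shows "cols (A * M) = map (\<lambda>c. A *\<^sub>v c) (cols M)"
  using assms by (intro nth_equalityI) auto

lemma dim_row_hcat[simp]: "dim_row (hcat A B) = dim_row A"
  and dim_col_hcat[simp]: "dim_col (hcat A B) = dim_col A + dim_col B"
  unfolding hcat_def by auto

lemma cols_hcat:
  assumes "dim_row B = dim_row A"
  shows "cols (hcat A B) = cols A @ cols B"
proof (rule nth_equalityI)
  fix j assume "j < length (cols (hcat A B))"
  then show "cols (hcat A B) ! j = (cols A @ cols B) ! j"
    using assms unfolding hcat_def by (auto simp: nth_append)
qed simp

lemma dim_row_cols_hcat_list:
  assumes "\<forall>A\<in>set As. dim_row A = r"
  shows "dim_row (hcat_list r As) = r \<and> cols (hcat_list r As) = concat (map cols As)"
  using assms
proof (induction As)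
  case Nil
  show ?case unfolding hcat_list_def cols_def by simp
next
  case (Cons A As)
  then show ?case
    using cols_hcat[of "hcat_list r As" A] unfolding hcat_list_def by simp
qed

lemma set_cols_hcat_list:
  assumes "\<forall>A\<in>set As. dim_row A = r"
  shows "set (cols (hcat_list r As)) = (\<Union>A\<in>set As. set (cols A))"
  using dim_row_cols_hcat_list[OF assms] by simp

lemma dim_col_hcat_list:
  assumes "\<forall>A\<in>set As. dim_row A = r"
  shows "dim_col (hcat_list r As) = sum_list (map dim_col As)"
proof -
  have "dim_col (hcat_list r As) = length (cols (hcat_list r As))" by simp
  also have "\<dots> = sum_list (map dim_col As)"
    using dim_row_cols_hcat_list[OF assms] by (simp add: length_concat comp_def)
  finally show ?thesis .
qed

lemma cols_one_mat: "cols (1\<^sub>m N) = unit_vecs N"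
  unfolding cols_def unit_vecs_def by (intro map_cong) auto

lemma mrank_eq_rank_set: "mrank M = vec_space.rank_set (dim_row M) (set (cols M))"
  unfolding mrank_def vec_space.rank_def ..

lemma mrank_hcat_list:
  assumes "\<forall>A\<in>set As. dim_row A = r"
  shows "mrank (hcat_list r As) = vec_space.rank_set r (\<Union>A\<in>set As. set (cols A))"
  using dim_row_cols_hcat_list[OF assms] mrank_eq_rank_set[of "hcat_list r As"] by simp

lemma mrank_hcat_list_single:
  assumes "dim_row M = r"
  shows "mrank (hcat_list r [M]) = mrank M"
  using mrank_hcat_list[of "[M]" r] mrank_eq_rank_set[of M] assms by simp

lemma mrank_hcat_list_sorted:
  assumes "\<forall>i\<in>S. dim_row (A i) = N" "finite S"
  shows "mrank (hcat_list N (map A (sorted_list_of_set S)))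
    = vec_space.rank_set N (\<Union>i\<in>S. set (cols (A i :: 'a::field mat)))"
  using mrank_hcat_list[of "map A (sorted_list_of_set S)" N] assms by simp

context vec_space begin

lemma mrank_hcat_eq_iff_orthogonal_complement:
  fixes D K L :: "'a mat"
  assumes "dim_row D = n" "dim_row K = n" "dim_row L = n"
  shows "mrank (hcat_list n [D, K, L]) = mrank (hcat_list n [K, L]) \<longleftrightarrow>
    orthogonal_complement (set (cols K) \<union> set (cols L)) \<subseteq> orthogonal_complement (set (cols D))"
proof -
  have "set (cols M) \<subseteq> carrier_vec n" if "dim_row M = n" for M :: "'a mat"
    using cols_dim[of M] that by simp
  then show ?thesis
    using assms mrank_hcat_list[of "[D, K, L]" n] mrank_hcat_list[of "[K, L]" n]
      rank_set_Un_eq_iff_orthogonal_complement[of "set (cols K) \<union> set (cols L)" "set (cols D)"]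
    by (simp add: Un_assoc)
qed

lemma vmult_eq_iff_orthogonal_complement:
  fixes M :: "'a mat"
  assumes M: "dim_row M = n" and X: "X \<in> carrier_vec n" and Y: "Y \<in> carrier_vec n"
  shows "vmult X M = vmult Y M \<longleftrightarrow> X - Y \<in> orthogonal_complement (set (cols M))"
proof -
  have "vmult X M = vmult Y M \<longleftrightarrow> (\<forall>j < dim_col M. col M j \<bullet> X = col M j \<bullet> Y)"
    unfolding vmult_def by (auto simp: vec_eq_iff)
  also have "\<dots> \<longleftrightarrow> (\<forall>c \<in> set (cols M). (X - Y) \<bullet> c = 0)"
  proof -
    have "(X - Y) \<bullet> c = c \<bullet> X - c \<bullet> Y" if "c \<in> carrier_vec n" for c
      using minus_scalar_prod_distrib[OF X Y that] comm_scalar_prod[OF X that]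
        comm_scalar_prod[OF Y that] by simp
    then show ?thesis using M cols_dim[of M] by (auto simp: cols_def)
  qed
  finally show ?thesis using X Y unfolding orthogonal_complement_def by auto
qed

lemma linear_decoder_exists_iff:
  fixes K L D :: "'a mat"
  assumes K: "dim_row K = n" and L: "dim_row L = n" and D: "dim_row D = n"
  shows "(\<exists>\<psi>. \<forall>X\<in>carrier_vec n. \<psi> (vmult X K) (vmult X L) = vmult X D) \<longleftrightarrow>
    orthogonal_complement (set (cols K) \<union> set (cols L)) \<subseteq> orthogonal_complement (set (cols D))"
    (is "(\<exists>\<psi>. ?decodes \<psi>) \<longleftrightarrow> _")
proof
  assume "\<exists>\<psi>. ?decodes \<psi>"
  then obtain \<psi> where \<psi>: "?decodes \<psi>" by blast
  show "orthogonal_complement (set (cols K) \<union> set (cols L)) \<subseteq> orthogonal_complement (set (cols D))"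
  proof
    fix Z assume "Z \<in> orthogonal_complement (set (cols K) \<union> set (cols L))"
    then have Z: "Z \<in> carrier_vec n" "Z \<in> orthogonal_complement (set (cols K))"
      "Z \<in> orthogonal_complement (set (cols L))"
      unfolding orthogonal_complement_def by auto
    txt \<open>The receiver cannot tell \<open>Z\<close> from \<open>0\<close>, so it decodes the same demand for both.\<close>
    have "vmult Z D = \<psi> (vmult Z K) (vmult Z L)" using \<psi> Z(1) by simp
    also have "\<dots> = \<psi> (vmult (0\<^sub>v n) K) (vmult (0\<^sub>v n) L)"
      using Z vmult_eq_iff_orthogonal_complement[OF K Z(1) zero_carrier_vec]
        vmult_eq_iff_orthogonal_complement[OF L Z(1) zero_carrier_vec] by simp
    also have "\<dots> = vmult (0\<^sub>v n) D" using \<psi> by simp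
    finally show "Z \<in> orthogonal_complement (set (cols D))"
      using vmult_eq_iff_orthogonal_complement[OF D Z(1) zero_carrier_vec] Z(1) by simp
  qed
next
  assume orth: "orthogonal_complement (set (cols K) \<union> set (cols L))
    \<subseteq> orthogonal_complement (set (cols D))"
  let ?preimage = "\<lambda>a b Y. Y \<in> carrier_vec n \<and> vmult Y K = a \<and> vmult Y L = b"
  have "?decodes (\<lambda>a b. vmult (SOME Y. ?preimage a b Y) D)"
  proof
    fix X :: "'a vec" assume X: "X \<in> carrier_vec n"
    define Y where "Y = (SOME Y. ?preimage (vmult X K) (vmult X L) Y)"
    have Y: "?preimage (vmult X K) (vmult X L) Y"
      unfolding Y_def using X by (intro someI) blast
    then have "X - Y \<in> orthogonal_complement (set (cols K) \<union> set (cols L))"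
      using vmult_eq_iff_orthogonal_complement[OF K X, of Y]
        vmult_eq_iff_orthogonal_complement[OF L X, of Y]
      by (simp add: orthogonal_complement_Un)
    then have "vmult X D = vmult Y D"
      using orth vmult_eq_iff_orthogonal_complement[OF D X] Y by blast
    then show "vmult (SOME Y. ?preimage (vmult X K) (vmult X L) Y) D = vmult X D"
      unfolding Y_def by simp
  qed
  then show "\<exists>\<psi>. ?decodes \<psi>" by (rule exI[of _ "\<lambda>a b. vmult (SOME Y. ?preimage a b Y) D"])
qed

lemma mrank_hcat_eq_if_linear_decoder:
  fixes K D L L' :: "'a mat"
  assumes K: "dim_row K = n" and D: "dim_row D = n"
    and L: "L \<in> carrier_mat n l" and L': "L' \<in> carrier_mat n l'"
    and span: "set (cols L) \<subseteq> span (set (cols L'))"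
    and decoder: "\<forall>X\<in>carrier_vec n. \<psi> (vmult X K) (vmult X L) = vmult X D"
  shows "mrank (hcat_list n [D, K, L']) = mrank (hcat_list n [K, L'])"
proof -
  have "orthogonal_complement (set (cols L')) \<subseteq> orthogonal_complement (set (cols L))"
    using subset_span_iff_orthogonal_complement[of "set (cols L')" "set (cols L)"] span L L'
      cols_dim[of L] cols_dim[of L'] by auto
  moreover have "orthogonal_complement (set (cols K) \<union> set (cols L))
    \<subseteq> orthogonal_complement (set (cols D))"
    using linear_decoder_exists_iff[OF K _ D, of L] decoder L by auto
  ultimately show ?thesis
    using mrank_hcat_eq_iff_orthogonal_complement[OF D K, of L'] L'
    by (auto simp: orthogonal_complement_Un)
qed

lemma linear_decoder_if_mrank_hcat_mult_eq:
  fixes A B K D L :: "'a mat"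
  assumes A: "A \<in> carrier_mat n n" and B: "B \<in> carrier_mat n n" "B * A = 1\<^sub>m n"
    and K: "K \<in> carrier_mat n k" and D: "D \<in> carrier_mat n d" and L: "L \<in> carrier_mat n l"
    and rank: "mrank (hcat_list n [A * D, A * K, A * L]) = mrank (hcat_list n [A * K, A * L])"
  shows "\<exists>\<psi>. \<forall>X\<in>carrier_vec n. \<psi> (vmult X K) (vmult X L) = vmult X D"
proof -
  let ?mult = "\<lambda>c. A *\<^sub>v c"
  have "orthogonal_complement (set (cols (A * K)) \<union> set (cols (A * L)))
    \<subseteq> orthogonal_complement (set (cols (A * D)))"
    using rank mrank_hcat_eq_iff_orthogonal_complement[of "A * D" "A * K" "A * L"] A K D L
    by simp
  then have "orthogonal_complement (?mult ` (set (cols K) \<union> set (cols L)))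
    \<subseteq> orthogonal_complement (?mult ` set (cols D))"
    using cols_mult[OF A K] cols_mult[OF A D] cols_mult[OF A L] by (simp add: image_Un)
  then have "orthogonal_complement (set (cols K) \<union> set (cols L))
    \<subseteq> orthogonal_complement (set (cols D))"
    using orthogonal_complement_image_mult_cancel[OF A B] K D L cols_dim[of K] cols_dim[of L]
      cols_dim[of D] by auto
  then show ?thesis using linear_decoder_exists_iff K D L by auto
qed

lemma exists_full_rank_spanning_cols:
  assumes L: "L \<in> carrier_mat n l" and "l \<le> n"
  obtains L' where "L' \<in> carrier_mat n l" "mrank L' = l" "set (cols L) \<subseteq> span (set (cols L'))"
proof -
  have L_carrier: "set (cols L) \<subseteq> carrier_vec n" using cols_dim[of L] carrier_matD(1)[OF L] by simp
  obtain B where B: "maximal B (\<lambda>X. X \<subseteq> set (cols L) \<and> lin_indpt X)"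
    using maximal_lin_indpt_exists[of "set (cols L)"] by blast
  note B_L = maximal_lin_indptD(1)[OF B]
  have "card B \<le> l" using card_mono[OF _ B_L] card_length[of "cols L"] L by simp
  then obtain C where C: "B \<subseteq> C" "C \<subseteq> carrier_vec n" "finite C" "lin_indpt C" "card C = l"
    using lin_indpt_extend_card[OF _ finite_subset[OF B_L] maximal_lin_indptD(2)[OF B] _ \<open>l \<le> n\<close>]
      B_L L_carrier by blast
  obtain xs where xs: "set xs = C" "distinct xs" using finite_distinct_list[OF C(3)] by blast
  have "length xs = l" using xs C(5) distinct_card by fastforce
  define L' where "L' = mat_of_cols n xs"
  have L': "L' \<in> carrier_mat n l" unfolding L'_def using \<open>length xs = l\<close> by auto
  have "mrank L' = l"
    using rank_mat_of_cols[of xs] xs C(2,4) \<open>length xs = l\<close> L' unfolding L'_def mrank_def by simp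
  moreover have "set (cols L) \<subseteq> span (set (cols L'))"
    using maximal_lin_indpt_spans[OF L_carrier B] span_is_monotone[OF C(1)] xs C(2)
    unfolding L'_def by simp
  ultimately show ?thesis using that L' by blast
qed

end

lemma discrete_polymatroid_eq_on:
  assumes "discrete_polymatroid E \<rho>'" and eq: "\<And>S. S \<subseteq> E \<Longrightarrow> \<rho> S = \<rho>' S"
  shows "discrete_polymatroid E \<rho>"
proof -
  from assms(1) have empty: "\<rho>' {} = 0"
    and mono: "\<And>X Y. X \<subseteq> Y \<Longrightarrow> Y \<subseteq> E \<Longrightarrow> \<rho>' X \<le> \<rho>' Y"
    and submod: "\<And>X Y. X \<subseteq> E \<Longrightarrow> Y \<subseteq> E \<Longrightarrow> \<rho>' (X \<union> Y) + \<rho>' (X \<inter> Y) \<le> \<rho>' X + \<rho>' Y"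
    unfolding discrete_polymatroid_def by blast+
  show ?thesis unfolding discrete_polymatroid_def
  proof (intro conjI allI impI)
    show "\<rho> {} = 0" using empty eq[of "{}"] by simp
  next
    fix X Y assume "X \<subseteq> Y \<and> Y \<subseteq> E"
    then show "\<rho> X \<le> \<rho> Y" using mono[of X Y] eq[of X] eq[of Y] by auto
  next
    fix X Y assume XY: "X \<subseteq> E \<and> Y \<subseteq> E"
    then have "X \<union> Y \<subseteq> E" "X \<inter> Y \<subseteq> E" by blast+
    with XY show "\<rho> (X \<union> Y) + \<rho> (X \<inter> Y) \<le> \<rho> X + \<rho> Y"
      using submod[of X Y] eq[of X] eq[of Y] eq[of "X \<union> Y"] eq[of "X \<inter> Y"] by simp
  qed
qed

lemma column_rank_polymatroid_representation:
  fixes A :: "nat \<Rightarrow> 'a::field mat"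
  assumes A: "\<forall>i\<in>E. A i \<in> carrier_mat N (mrank (A i))" and "finite E"
    and full: "mrank (hcat_list N (map A (sorted_list_of_set E))) = N"
  defines "\<rho> \<equiv> \<lambda>S. mrank (hcat_list N (map A (sorted_list_of_set S)))"
  shows "discrete_polymatroid E \<rho>" "representation_matrices E \<rho> A"
proof -
  have rows: "\<forall>i\<in>E. dim_row (A i) = N" using A by auto
  have poly: "discrete_polymatroid E (\<lambda>S. vec_space.rank_set N (\<Union>i\<in>S. set (cols (A i))))"
  proof (rule vec_space.discrete_polymatroid_rank_set_UN[OF _ _ \<open>finite E\<close>])
    show "set (cols (A i)) \<subseteq> carrier_vec N" if "i \<in> E" for i
      using cols_dim[of "A i"] rows that by simp
  qed simp
  have "\<rho> S = vec_space.rank_set N (\<Union>i\<in>S. set (cols (A i)))" if "S \<subseteq> E" for S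
    unfolding \<rho>_def
    using mrank_hcat_list_sorted[of S A N] rows that finite_subset[OF that \<open>finite E\<close>] by auto
  then show "discrete_polymatroid E \<rho>" by (intro discrete_polymatroid_eq_on[OF poly]) simp
  have "\<rho> {i} = mrank (A i)" if "i \<in> E" for i
    unfolding \<rho>_def using mrank_hcat_list_single[of "A i" N] rows that by simp
  then show "representation_matrices E \<rho> A"
    unfolding representation_matrices_def using A full \<rho>_def by auto
qed

definition identity_block :: "nat \<Rightarrow> nat \<Rightarrow> nat \<Rightarrow> 'a::zero_neq_one mat" where
  "identity_block N b i = mat_of_cols N (map (unit_vec N) [i * b..<i * b + b])"

lemma identity_block_carrier: "identity_block N b i \<in> carrier_mat N b"
  unfolding identity_block_def by auto

lemma cols_identity_block: "cols (identity_block N b i) = map (unit_vec N) [i * b..<i * b + b]"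
  unfolding identity_block_def by (intro cols_mat_of_cols) auto

lemma concat_upt_blocks: "concat (map (\<lambda>i. [i * b..<i * b + b]) [0..<m]) = [0..<m * b]"
proof (induction m)
  case (Suc m)
  then show ?case using upt_add_eq_append[of 0 "m * b" b] by (simp add: add.commute)
qed simp

lemma hcat_identity_blocks:
  "hcat_list (m * b) (map (identity_block (m * b) b) [0..<m]) = (1\<^sub>m (m * b) :: 'a::field mat)"
    (is "?H = _")
proof -
  let ?N = "m * b"
  have rows: "\<forall>A\<in>set (map (identity_block ?N b) [0..<m]). dim_row (A :: 'a mat) = ?N"
    using identity_block_carrier by auto
  have "cols ?H = concat (map (\<lambda>i. map (unit_vec ?N) [i * b..<i * b + b]) [0..<m])"
    using dim_row_cols_hcat_list[OF rows] by (simp add: cols_identity_block comp_def)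
  also have "\<dots> = map (unit_vec ?N) (concat (map (\<lambda>i. [i * b..<i * b + b]) [0..<m]))"
    by (simp add: map_concat comp_def)
  also have "\<dots> = map (unit_vec ?N) [0..<?N]" by (simp only: concat_upt_blocks)
  also have "\<dots> = cols (1\<^sub>m ?N)" unfolding cols_def by (intro map_cong) auto
  finally have "mat_of_cols ?N (cols ?H) = mat_of_cols ?N (cols (1\<^sub>m ?N :: 'a mat))" by simp
  then show ?thesis using dim_row_cols_hcat_list[OF rows] mat_of_cols_cols[of ?H]
    mat_of_cols_cols[of "1\<^sub>m ?N :: 'a mat"] by simp
qed

lemma mrank_identity_block:
  assumes "i * b + b \<le> N"
  shows "mrank (identity_block N b i :: 'a::field mat) = b"
proof -
  interpret vec_space "TYPE('a)" N .
  have "distinct (cols (identity_block N b i :: 'a mat))"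
    unfolding cols_identity_block using assms by (auto simp: distinct_map inj_on_def)
  moreover have "set (cols (identity_block N b i :: 'a mat)) \<subseteq> set (unit_vecs N)"
    unfolding cols_identity_block unit_vecs_def using assms by auto
  then have "lin_indpt (set (cols (identity_block N b i :: 'a mat)))"
    using subset_li_is_li unit_vecs_basis unfolding basis_def by blast
  ultimately show ?thesis
    using lin_indpt_full_rank[OF identity_block_carrier] carrier_matD(1)[OF identity_block_carrier]
    unfolding mrank_def by metis
qed

definition index_code_polymatroid ::
  "nat \<Rightarrow> nat \<Rightarrow> ('a::field mat \<times> 'a mat) list \<Rightarrow> nat \<Rightarrow> (nat set \<Rightarrow> nat) \<Rightarrow> (nat \<Rightarrow> 'a mat) \<Rightarrow> bool"
where
  "index_code_polymatroid m n R l \<rho> A \<longleftrightarrow>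
     discrete_polymatroid {1..m+1} \<rho> \<and>
     representation_matrices {1..m+1} \<rho> A \<and>
     \<rho> {1..m+1} = m * n \<and>
     (\<forall>i\<in>{1..m}. \<rho> {i} = n) \<and> \<rho> {1..m} = m * n \<and> \<rho> {m+1} = l \<and>
     (\<forall>(K,D)\<in>set R.
        let AA = hcat_list (m*n) (map A [1..<m+1]) in
        mrank (hcat_list (m*n) [AA * D, AA * K, A (m+1)])
          = mrank (hcat_list (m*n) [AA * K, A (m+1)]))"

lemma identity_blocks_representation:
  fixes L' :: "'a::field mat"
  assumes L': "L' \<in> carrier_mat (m * n) l" "mrank L' = l"
  defines "A \<equiv> \<lambda>i. if i \<le> m then identity_block (m * n) n (i - 1) else L'"
  defines "\<rho> \<equiv> \<lambda>S. mrank (hcat_list (m * n) (map A (sorted_list_of_set S)))"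
  shows "hcat_list (m * n) (map A [1..<m+1]) = 1\<^sub>m (m * n)"
    and "discrete_polymatroid {1..m+1} \<rho>" "representation_matrices {1..m+1} \<rho> A"
    and "\<rho> {1..m+1} = m * n" "\<forall>i\<in>{1..m}. \<rho> {i} = n" "\<rho> {1..m} = m * n" "\<rho> {m+1} = l"
proof -
  let ?N = "m * n"
  interpret vec_space "TYPE('a)" ?N .
  have A: "A i \<in> carrier_mat ?N (mrank (A i))" "mrank (A i) = (if i \<le> m then n else l)"
    if "i \<in> {1..m+1}" for i
  proof -
    have "(i - 1) * n + n \<le> ?N" if "i \<le> m"
      using that \<open>i \<in> {1..m+1}\<close> mult_le_mono1[of i m n] by (cases i) auto
    then show "mrank (A i) = (if i \<le> m then n else l)"
      unfolding A_def using mrank_identity_block L'(2) by auto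
    then show "A i \<in> carrier_mat ?N (mrank (A i))"
      unfolding A_def using identity_block_carrier L'(1) by auto
  qed
  have rows: "\<forall>i\<in>{1..m+1}. dim_row (A i) = ?N" using A by blast
  have upt_shift: "[1..<m+1] = map Suc [0..<m]" by (simp add: map_Suc_upt)
  have "map A [1..<m+1] = map (identity_block ?N n) [0..<m]"
    unfolding upt_shift map_map by (intro map_cong) (auto simp: A_def)
  then show AA: "hcat_list ?N (map A [1..<m+1]) = 1\<^sub>m ?N"
    using hcat_identity_blocks[of m n] by simp
  have \<rho>: "\<rho> S = rank_set (\<Union>i\<in>S. set (cols (A i)))" if "S \<subseteq> {1..m+1}" for S
    unfolding \<rho>_def using mrank_hcat_list_sorted[of S A ?N] rows that finite_subset[OF that] by auto
  have set_blocks: "set [1..<m+1] = {1..m}" by auto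
  have "(\<Union>i\<in>{1..m}. set (cols (A i))) = set (cols (hcat_list ?N (map A [1..<m+1])))"
    using set_cols_hcat_list[of "map A [1..<m+1]" ?N] rows
    unfolding set_map set_blocks by (simp only: image_image) auto
  then have units: "(\<Union>i\<in>{1..m}. set (cols (A i))) = set (unit_vecs ?N)"
    unfolding AA cols_one_mat .
  have full: "\<rho> S = ?N" if "{1..m} \<subseteq> S" "S \<subseteq> {1..m+1}" for S
  proof -
    have "(\<Union>i\<in>S. set (cols (A i))) \<subseteq> carrier_vec ?N"
      using cols_dim rows that(2) by fastforce
    moreover have "set (unit_vecs ?N) \<subseteq> (\<Union>i\<in>S. set (cols (A i)))"
      using units that(1) by blast
    ultimately show ?thesis using \<rho>[OF that(2)] rank_set_full by simp
  qed
  have single: "\<rho> {i} = mrank (A i)" if "i \<in> {1..m+1}" for i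
    unfolding \<rho>_def using mrank_hcat_list_single[of "A i" ?N] rows that by simp
  show "\<rho> {1..m+1} = ?N" "\<rho> {1..m} = ?N" using full by auto
  show "\<forall>i\<in>{1..m}. \<rho> {i} = n" "\<rho> {m+1} = l" using single A by auto
  show "discrete_polymatroid {1..m+1} \<rho>" "representation_matrices {1..m+1} \<rho> A"
    using column_rank_polymatroid_representation[of "{1..m+1}" A ?N] A full[of "{1..m+1}"]
    unfolding \<rho>_def by auto
qed

lemma linear_index_code_imp_polymatroid:
  fixes R :: "('a::field mat \<times> 'a mat) list"
  assumes wf: "wf_receivers m n R" and "l \<le> m * n" and code: "linear_index_code m n R l L"
  shows "\<exists>\<rho> A. index_code_polymatroid m n R l \<rho> A"
proof -
  let ?N = "m * n"
  interpret vec_space "TYPE('a)" ?N .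
  have L: "L \<in> carrier_mat ?N l" using code unfolding linear_index_code_def by blast
  obtain L' where L': "L' \<in> carrier_mat ?N l" "mrank L' = l" "set (cols L) \<subseteq> span (set (cols L'))"
    using exists_full_rank_spanning_cols[OF L \<open>l \<le> m * n\<close>] by blast
  define A where "A \<equiv> \<lambda>i. if i \<le> m then identity_block ?N n (i - 1) else L'"
  define \<rho> where "\<rho> \<equiv> \<lambda>S. mrank (hcat_list ?N (map A (sorted_list_of_set S)))"
  note C1 = identity_blocks_representation[OF L'(1,2), folded A_def, folded \<rho>_def]
  have "A (m+1) = L'" unfolding A_def by simp
  have receivers: "\<forall>(K,D)\<in>set R.
      let AA = hcat_list ?N (map A [1..<m+1]) in
      mrank (hcat_list ?N [AA * D, AA * K, A (m+1)]) = mrank (hcat_list ?N [AA * K, A (m+1)])"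
  proof (intro ballI, clarify)
    fix K D assume KD: "(K, D) \<in> set R"
    then have K: "K \<in> carrier_mat ?N (dim_col K)" and D: "D \<in> carrier_mat ?N (dim_col D)"
      using wf unfolding wf_receivers_def by auto
    obtain \<psi> where "\<forall>X\<in>carrier_vec ?N. \<psi> (vmult X K) (vmult X L) = vmult X D"
      using code KD unfolding linear_index_code_def by auto
    then show "let AA = hcat_list ?N (map A [1..<m+1]) in
      mrank (hcat_list ?N [AA * D, AA * K, A (m+1)]) = mrank (hcat_list ?N [AA * K, A (m+1)])"
      using mrank_hcat_eq_if_linear_decoder[OF _ _ L L'(1,3)] K D
      unfolding C1(1) Let_def \<open>A (m+1) = L'\<close> by simp
  qed
  have "index_code_polymatroid m n R l \<rho> A"
    using C1(2-) receivers unfolding index_code_polymatroid_def \<rho>_def by blast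
  then show ?thesis by blast
qed

lemma hcat_representation_blocks:
  fixes A :: "nat \<Rightarrow> 'a::field mat"
  assumes rep: "representation_matrices {1..m+1} \<rho> A" and "\<rho> {1..m+1} = m * n"
    and "\<forall>i\<in>{1..m}. \<rho> {i} = n" "\<rho> {1..m} = m * n"
  shows "hcat_list (m * n) (map A [1..<m+1]) \<in> carrier_mat (m * n) (m * n)"
    and "mrank (hcat_list (m * n) (map A [1..<m+1])) = m * n"
proof -
  let ?AA = "hcat_list (m * n) (map A [1..<m+1])"
  have A: "A i \<in> carrier_mat (m * n) n" if "i \<in> {1..m}" for i
  proof -
    have "i \<in> {1..m+1}" using that by auto
    then have "A i \<in> carrier_mat (m * n) (\<rho> {i})"
      using rep assms(2) unfolding representation_matrices_def by auto
    then show ?thesis using assms(3) that by auto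
  qed
  have set_blocks: "set [1..<m+1] = {1..m}" by auto
  have rows: "\<forall>M\<in>set (map A [1..<m+1]). dim_row M = m * n"
    unfolding set_map set_blocks using A[THEN carrier_matD(1)] by auto
  have "map dim_col (map A [1..<m+1]) = map (\<lambda>_. n) [1..<m+1]"
    unfolding map_map by (intro map_cong refl) (use A[THEN carrier_matD(2)] in auto)
  then have "dim_col ?AA = sum_list (map (\<lambda>_. n) [1..<m+1])"
    using dim_col_hcat_list[OF rows] by (simp only:)
  also have "\<dots> = m * n" by (simp add: sum_list_triv del: upt_Suc)
  finally show "?AA \<in> carrier_mat (m * n) (m * n)"
    using dim_row_cols_hcat_list[OF rows] by auto
  have "sorted_list_of_set {1..m} = [1..<m+1]"
    by (simp add: atLeastLessThanSuc_atLeastAtMost[symmetric])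
  moreover have "mrank (hcat_list (m * n) (map A (sorted_list_of_set {1..m}))) = \<rho> {1..m}"
    using rep assms(2) unfolding representation_matrices_def by auto
  ultimately show "mrank ?AA = m * n" using assms(4) by (simp del: upt_Suc)
qed

lemma polymatroid_imp_linear_index_code:
  fixes R :: "('a::field mat \<times> 'a mat) list" and A :: "nat \<Rightarrow> 'a mat"
  assumes wf: "wf_receivers m n R" and P: "index_code_polymatroid m n R l \<rho> A"
  shows "\<exists>L. linear_index_code m n R l L"
proof -
  let ?N = "m * n"
  interpret vec_space "TYPE('a)" ?N .
  define AA where "AA = hcat_list ?N (map A [1..<m+1])"
  from P have rep: "representation_matrices {1..m+1} \<rho> A" and \<rho>_last: "\<rho> {m+1} = l"
    and receivers: "\<forall>(K,D)\<in>set R.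
      mrank (hcat_list ?N [AA * D, AA * K, A (m+1)]) = mrank (hcat_list ?N [AA * K, A (m+1)])"
    unfolding index_code_polymatroid_def AA_def Let_def by blast+
  from P have AA: "AA \<in> carrier_mat ?N ?N" "mrank AA = ?N"
    using hcat_representation_blocks unfolding index_code_polymatroid_def AA_def by blast+
  then have "rank AA = ?N" unfolding mrank_def by simp
  then obtain B where B: "B \<in> carrier_mat ?N ?N" "B * AA = 1\<^sub>m ?N" "AA * B = 1\<^sub>m ?N"
    using full_rank_invertible[OF AA(1)] by blast
  have A_last: "A (m+1) \<in> carrier_mat ?N l"
    using rep P \<rho>_last unfolding representation_matrices_def index_code_polymatroid_def by auto
  define L where "L = B * A (m+1)"
  have L: "L \<in> carrier_mat ?N l" unfolding L_def using B(1) A_last by simp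
  have "AA * L = A (m+1)"
    unfolding L_def using assoc_mult_mat[OF AA(1) B(1) A_last] B(3) A_last by simp
  have "\<exists>\<psi>. \<forall>X\<in>carrier_vec ?N. \<psi> (vmult X K) (vmult X L) = vmult X D" if "(K, D) \<in> set R" for K D
  proof (rule linear_decoder_if_mrank_hcat_mult_eq[OF AA(1) B(1,2) _ _ L])
    show "K \<in> carrier_mat ?N (dim_col K)" "D \<in> carrier_mat ?N (dim_col D)"
      using wf that unfolding wf_receivers_def by auto
    show "mrank (hcat_list ?N [AA * D, AA * K, AA * L]) = mrank (hcat_list ?N [AA * K, AA * L])"
      using receivers that unfolding \<open>AA * L = A (m+1)\<close> by blast
  qed
  then have "linear_index_code m n R l L" unfolding linear_index_code_def using L by auto
  then show ?thesis by blast
qed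

theorem theorem1:
  fixes m n l :: nat
    and R :: "('a::{finite,field} mat \<times> 'a mat) list"
  assumes "wf_receivers m n R"
    and "l \<le> m * n"
  shows "(\<exists>L. linear_index_code m n R l L) \<longleftrightarrow>
    (\<exists>\<rho> (A :: nat \<Rightarrow> 'a mat).
       discrete_polymatroid {1..m+1} \<rho> \<and>
       representation_matrices {1..m+1} \<rho> A \<and>
       \<rho> {1..m+1} = m * n \<and>
       (\<forall>i\<in>{1..m}. \<rho> {i} = n) \<and> \<rho> {1..m} = m * n \<and> \<rho> {m+1} = l \<and>
       (\<forall>(K,D)\<in>set R.
          let AA = hcat_list (m*n) (map A [1..<m+1]) in
          mrank (hcat_list (m*n) [AA * D, AA * K, A (m+1)])
            = mrank (hcat_list (m*n) [AA * K, A (m+1)])))"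
proof -
  have "(\<exists>L. linear_index_code m n R l L) \<longleftrightarrow> (\<exists>\<rho> (A :: nat \<Rightarrow> 'a mat). index_code_polymatroid m n R l \<rho> A)"
    using linear_index_code_imp_polymatroid[OF assms] polymatroid_imp_linear_index_code[OF assms(1)]
    by blast
  then show ?thesis unfolding index_code_polymatroid_def .
qed

end
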